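(* Let $\mathcal{M}$ be a separable metric space, $f:\mathcal{M}\to\mathcal{M}$ a continuous bijection with continuous inverse, $\mathcal{X}\subseteq\mathcal{M}$ forward invariant under $f$, $\mathcal{Z}$ a separable metric space, $g:\mathcal{Z}\to\mathcal{Z}$ a continuous bijection with continuous inverse, and $F:\mathcal{X}\to\mathcal{Z}$ continuous with $F\circ f=g\circ F$ on $\mathcal{X}$. For any $\xi\in\mathcal{X}$, if the trajectory through $\xi$ is backward precompact in $\mathcal{X}$, then $F(\xi)\in D^-_{\mathcal{Z}}(F(\alpha_{\mathcal{X}}(\xi)))$.
   Context: $\alpha_{\mathcal{X}}(\xi)$ is the set of $x\in\mathcal{X}$ such that $f^{-k_j}(\xi)\to x$ for some indices $k_j\to\infty$ ($f^{-k}$ the $k$-th iterate of $f^{-1}$); $\alpha_{\mathcal{Z}}(\zeta)$ is defined analogously with $g^{-1}$. $D^-_{\mathcal{Z}}(\Gamma)=\{\zeta\in\mathcal{Z}\mid\alpha_{\mathcal{Z}}(\zeta)=\Gamma\}$. The trajectory through $\xi$ is backward precompact in $\mathcal{X}$ if the closure in $\mathcal{X}$ of $\{f^{-k}(\xi)\mid k\in\mathbb{N}\}$ is compact. *)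

theory Defs
  imports "HOL-Analysis.Analysis"
begin

definition separable_space :: "'a::metric_space itself \<Rightarrow> bool" where
  "separable_space _ \<longleftrightarrow> (\<exists>D::'a set. countable D \<and> closure D = UNIV)"

definition alpha_limit :: "'a::metric_space set \<Rightarrow> ('a \<Rightarrow> 'a) \<Rightarrow> 'a \<Rightarrow> 'a set" where
  "alpha_limit S h \<xi> = {x \<in> S. \<exists>k::nat \<Rightarrow> nat. filterlim k at_top sequentially \<and>
       (\<lambda>j. ((inv h) ^^ (k j)) \<xi>) \<longlonglongrightarrow> x}"

definition Dminus :: "'a::metric_space set \<Rightarrow> ('a \<Rightarrow> 'a) \<Rightarrow> 'a set \<Rightarrow> 'a set" where
  "Dminus S h \<Gamma> = {\<zeta> \<in> S. alpha_limit S h \<zeta> = \<Gamma>}"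

definition backward_precompact :: "'a::metric_space set \<Rightarrow> ('a \<Rightarrow> 'a) \<Rightarrow> 'a \<Rightarrow> bool" where
  "backward_precompact S h \<xi> \<longleftrightarrow>
     (\<forall>k. ((inv h) ^^ k) \<xi> \<in> S) \<and>
     compact (S \<inter> closure {((inv h) ^^ k) \<xi> | k. True})"

end

theory Submission
  imports Defs
begin

text \<open>The backward orbit of \<open>F \<xi>\<close> under \<open>g\<close> is the \<open>F\<close>-image of the backward orbit of \<open>\<xi>\<close>
  under \<open>f\<close>. A continuous map sends limits of subsequences to limits of subsequences, and by
  precompactness every limit of a subsequence of the image orbit is the image of a limit of a
  further subsequence of the orbit itself.\<close>

definition subseq_limits :: "'a::metric_space set \<Rightarrow> (nat \<Rightarrow> 'a) \<Rightarrow> 'a set" where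
  "subseq_limits S s = {x \<in> S. \<exists>k::nat \<Rightarrow> nat. filterlim k at_top sequentially \<and>
       (\<lambda>j. s (k j)) \<longlonglongrightarrow> x}"

lemma alpha_limit_eq_subseq_limits:
  "alpha_limit S h \<xi> = subseq_limits S (\<lambda>k. ((inv h) ^^ k) \<xi>)"
  unfolding alpha_limit_def subseq_limits_def ..

lemma image_subseq_limits_subset:
  assumes "continuous_on X F" and "\<And>k. s k \<in> X"
  shows "F ` subseq_limits X s \<subseteq> subseq_limits UNIV (F \<circ> s)"
proof
  fix z assume "z \<in> F ` subseq_limits X s"
  then obtain a k where z: "z = F a" and a: "a \<in> X" and k: "filterlim k at_top sequentially"
    and ka: "(\<lambda>j. s (k j)) \<longlonglongrightarrow> a"
    unfolding subseq_limits_def by auto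
  have "(\<lambda>j. (F \<circ> s) (k j)) \<longlonglongrightarrow> z"
    using continuous_on_tendsto_compose[OF assms(1) ka a] assms(2) by (simp add: z comp_def)
  with k show "z \<in> subseq_limits UNIV (F \<circ> s)"
    unfolding subseq_limits_def by blast
qed

lemma subseq_limits_subset_image:
  assumes "continuous_on X F" and "\<And>k. s k \<in> X" and "compact (X \<inter> closure (range s))"
  shows "subseq_limits UNIV (F \<circ> s) \<subseteq> F ` subseq_limits X s"
proof
  fix z assume "z \<in> subseq_limits UNIV (F \<circ> s)"
  then obtain k where k: "filterlim k at_top sequentially"
    and kz: "(\<lambda>j. F (s (k j))) \<longlonglongrightarrow> z"
    unfolding subseq_limits_def by auto
  have "\<forall>n. s (k n) \<in> X \<inter> closure (range s)"
    using assms(2) closure_subset by blast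
  then obtain a r where a: "a \<in> X \<inter> closure (range s)" and r: "strict_mono r"
    and "((\<lambda>n. s (k n)) \<circ> r) \<longlonglongrightarrow> a"
    by (rule seq_compactE[OF compact_imp_seq_compact[OF assms(3)]])
  then have ar: "(\<lambda>j. s (k (r j))) \<longlonglongrightarrow> a"
    by (simp add: comp_def)
  have kr: "filterlim (\<lambda>j. k (r j)) at_top sequentially"
    using filterlim_compose[OF k filterlim_subseq[OF r]] .
  have "(\<lambda>j. F (s (k (r j)))) \<longlonglongrightarrow> F a"
    using continuous_on_tendsto_compose[OF assms(1) ar] a assms(2) by auto
  moreover have "(\<lambda>j. F (s (k (r j)))) \<longlonglongrightarrow> z"
    using LIMSEQ_subseq_LIMSEQ[OF kz r] by (simp add: comp_def)
  ultimately have "z = F a"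
    using LIMSEQ_unique by blast
  moreover have "a \<in> subseq_limits X s"
    unfolding subseq_limits_def using a kr ar by auto
  ultimately show "z \<in> F ` subseq_limits X s" by blast
qed

lemma image_subseq_limits:
  assumes "continuous_on X F" and "\<And>k. s k \<in> X" and "compact (X \<inter> closure (range s))"
  shows "F ` subseq_limits X s = subseq_limits UNIV (F \<circ> s)"
  using image_subseq_limits_subset[OF assms(1,2)] subseq_limits_subset_image[OF assms]
  by (rule subset_antisym)

lemma semiconj_inv_funpow:
  assumes "surj f" and "inj g"
    and orbit: "\<And>k. ((inv f) ^^ k) \<xi> \<in> X"
    and conj: "\<And>x. x \<in> X \<Longrightarrow> F (f x) = g (F x)"
  shows "F (((inv f) ^^ k) \<xi>) = ((inv g) ^^ k) (F \<xi>)"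
proof (induction k)
  case 0
  then show ?case by simp
next
  case (Suc k)
  let ?x = "\<lambda>k. ((inv f) ^^ k) \<xi>"
  have "?x k = f (?x (Suc k))"
    using \<open>surj f\<close> by (simp add: surj_f_inv_f)
  then have "F (?x k) = g (F (?x (Suc k)))"
    using conj orbit by metis
  then have "F (?x (Suc k)) = inv g (F (?x k))"
    using \<open>inj g\<close> by (metis inv_f_f)
  then show ?case
    using Suc by simp
qed

theorem corollary27:
  fixes f :: "'a::metric_space \<Rightarrow> 'a" and g :: "'b::metric_space \<Rightarrow> 'b"
    and F :: "'a \<Rightarrow> 'b" and X :: "'a set" and \<xi> :: 'a
  assumes sepM: "separable_space TYPE('a)"
    and f_bij: "bij f" and f_cont: "continuous_on UNIV f" and finv_cont: "continuous_on UNIV (inv f)"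
    and X_inv: "f ` X \<subseteq> X"
    and sepZ: "separable_space TYPE('b)"
    and g_bij: "bij g" and g_cont: "continuous_on UNIV g" and ginv_cont: "continuous_on UNIV (inv g)"
    and F_cont: "continuous_on X F"
    and F_conj: "\<And>x. x \<in> X \<Longrightarrow> F (f x) = g (F x)"
    and \<xi>X: "\<xi> \<in> X"
    and bpc: "backward_precompact X f \<xi>"
  shows "F \<xi> \<in> Dminus UNIV g (F ` alpha_limit X f \<xi>)"
proof -
  define x where "x = (\<lambda>k. ((inv f) ^^ k) \<xi>)"
  have orbit: "x k \<in> X" for k
    using bpc unfolding backward_precompact_def x_def by blast
  have precompact: "compact (X \<inter> closure (range x))"
    using bpc unfolding backward_precompact_def x_def by (simp add: full_SetCompr_eq)
  have image_orbit: "F \<circ> x = (\<lambda>k. ((inv g) ^^ k) (F \<xi>))"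
    using semiconj_inv_funpow[OF bij_is_surj[OF f_bij] bij_is_inj[OF g_bij], of \<xi> X F]
      orbit F_conj
    by (auto simp: x_def)
  have "alpha_limit UNIV g (F \<xi>) = subseq_limits UNIV (F \<circ> x)"
    by (simp add: alpha_limit_eq_subseq_limits image_orbit)
  also have "\<dots> = F ` subseq_limits X x"
    using image_subseq_limits[OF F_cont orbit precompact] by simp
  also have "\<dots> = F ` alpha_limit X f \<xi>"
    by (simp add: alpha_limit_eq_subseq_limits x_def)
  finally show ?thesis
    unfolding Dminus_def by simp
qed

end
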